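(* Let $k\in\mathbb{N}$ and for $n\in\mathbb{N}$ let $g(n)$ denote the maximum number of edges of an induced subgraph on $n$ vertices of the rectangular grid $\mathbb{Z}^k$. Then $g(1)=0$ and, for $n\ge 2$, \[ g(n)\le\max_{\substack{n_1+n_2=n\\ n_1,n_2\ge1}}\left(\min(n_1,n_2)+g(n_1)+g(n_2)\right). \]
   Context: The rectangular grid $\mathbb{Z}^k$ is the infinite graph with vertex set $\mathbb{Z}^k$ in which two points are adjacent iff their Manhattan distance $\sum_{i=1}^k|x_i-y_i|$ equals $1$. *)

theory Defs
  imports Main
begin

definition grid_pts :: "nat \<Rightarrow> int list set" where
  "grid_pts k = {x. length x = k}"

definition grid_adj :: "int list \<Rightarrow> int list \<Rightarrow> bool" where
  "grid_adj x y \<longleftrightarrow> length x = length y \<and> (\<Sum>i<length x. \<bar>x ! i - y ! i\<bar>) = 1"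

definition induced_edges :: "int list set \<Rightarrow> nat" where
  "induced_edges S = card {{x, y} | x y. x \<in> S \<and> y \<in> S \<and> grid_adj x y}"

definition grid_g :: "nat \<Rightarrow> nat \<Rightarrow> nat" where
  "grid_g k n = Max {induced_edges S | S. S \<subseteq> grid_pts k \<and> finite S \<and> card S = n}"

end

theory Submission
  imports Defs
begin

text \<open>Cut a finite set \<open>S \<subseteq> \<int>\<^sup>k\<close> with \<open>|S| \<ge> 2\<close> by a hyperplane \<open>x\<^sub>i = t + 1/2\<close> into two
nonempty parts. An edge crossing the cut joins some \<open>x\<close> to \<open>x + e\<^sub>i\<close>, so it is determined by either
of its endpoints; hence there are at most \<open>min |S\<^sub>1| |S\<^sub>2|\<close> crossing edges, and the remaining edges
lie inside one of the parts.\<close>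

definition edge_set :: "int list set \<Rightarrow> int list set set" where
  "edge_set S = {{x, y} | x y. x \<in> S \<and> y \<in> S \<and> grid_adj x y}"

definition cross_edges :: "int list set \<Rightarrow> int list set \<Rightarrow> int list set set" where
  "cross_edges A B = {{x, y} | x y. x \<in> A \<and> y \<in> B \<and> grid_adj x y}"

lemma induced_edges_eq_card_edge_set: "induced_edges S = card (edge_set S)"
  unfolding induced_edges_def edge_set_def ..

lemma edge_set_subset_Pow: "edge_set S \<subseteq> Pow S"
  unfolding edge_set_def by auto

lemma finite_edge_set: "finite S \<Longrightarrow> finite (edge_set S)"
  using edge_set_subset_Pow by (rule finite_subset) simp

lemma induced_edges_le_exp: "finite S \<Longrightarrow> induced_edges S \<le> 2 ^ card S"
  unfolding induced_edges_eq_card_edge_set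
  by (metis card_Pow card_mono edge_set_subset_Pow finite_Pow_iff)

lemma grid_adj_sym: "grid_adj x y \<longleftrightarrow> grid_adj y x"
  unfolding grid_adj_def by (auto simp: abs_minus_commute)

lemma grid_adj_irrefl: "\<not> grid_adj x x"
  unfolding grid_adj_def by simp

lemma grid_adj_coordinate_increase:
  assumes adj: "grid_adj x y" and i: "i < length x" and less: "x ! i < y ! i"
  shows "y = x[i := x ! i + 1]"
proof -
  let ?d = "\<lambda>j. \<bar>x ! j - y ! j\<bar>"
  have len: "length y = length x" using adj by (simp add: grid_adj_def)
  have "(\<Sum>j<length x. ?d j) = 1" using adj unfolding grid_adj_def by blast
  then have "?d i + (\<Sum>j\<in>{..<length x} - {i}. ?d j) = 1"
    using i by (simp add: sum.remove)
  moreover have "?d i \<ge> 1" using less by simp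
  moreover have "(\<Sum>j\<in>{..<length x} - {i}. ?d j) \<ge> 0" by (simp add: sum_nonneg)
  ultimately have di: "?d i = 1" and rest: "(\<Sum>j\<in>{..<length x} - {i}. ?d j) = 0"
    by linarith+
  have others: "y ! j = x ! j" if "j < length x" "j \<noteq> i" for j
    using rest that by (subst (asm) sum_nonneg_eq_0_iff) auto
  show ?thesis
  proof (rule nth_equalityI)
    show "length y = length (x[i := x ! i + 1])" using len by simp
    fix j assume "j < length y"
    with others di less len show "y ! j = x[i := x ! i + 1] ! j" by (cases "j = i") auto
  qed
qed

lemma edge_set_Un_subset:
  "edge_set (A \<union> B) \<subseteq> edge_set A \<union> edge_set B \<union> cross_edges A B"
proof
  fix e assume "e \<in> edge_set (A \<union> B)"
  then obtain x y where e: "e = {x, y}" "x \<in> A \<union> B" "y \<in> A \<union> B" "grid_adj x y"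
    unfolding edge_set_def by blast
  moreover have "e = {y, x}" "grid_adj y x" using e by (auto simp: grid_adj_sym)
  ultimately show "e \<in> edge_set A \<union> edge_set B \<union> cross_edges A B"
    unfolding edge_set_def cross_edges_def by blast
qed

lemma induced_edges_Un_le:
  assumes "finite A" "finite B"
  shows "induced_edges (A \<union> B) \<le> induced_edges A + induced_edges B + card (cross_edges A B)"
proof -
  have "cross_edges A B \<subseteq> edge_set (A \<union> B)"
    unfolding cross_edges_def edge_set_def by blast
  then have "finite (cross_edges A B)"
    using assms finite_edge_set[of "A \<union> B"] finite_subset by blast
  then have "card (edge_set (A \<union> B)) \<le> card (edge_set A \<union> edge_set B \<union> cross_edges A B)"
    using assms by (intro card_mono[OF _ edge_set_Un_subset]) (auto intro: finite_edge_set)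
  also have "\<dots> \<le> card (edge_set A) + card (edge_set B) + card (cross_edges A B)"
    by (meson add_le_mono card_Un_le le_trans order_refl)
  finally show ?thesis unfolding induced_edges_eq_card_edge_set .
qed

lemma card_cross_edges_le:
  assumes "finite A" "finite B"
    and lenA: "\<forall>a\<in>A. i < length a"
    and below: "\<forall>a\<in>A. a ! i \<le> t" and above: "\<forall>b\<in>B. t < b ! i"
  shows "card (cross_edges A B) \<le> min (card A) (card B)"
proof -
  have step: "b = a[i := a ! i + 1]" if "a \<in> A" "b \<in> B" "grid_adj a b" for a b
    using that lenA below above by (intro grid_adj_coordinate_increase) force+
  have "cross_edges A B \<subseteq> (\<lambda>a. {a, a[i := a ! i + 1]}) ` A"
    unfolding cross_edges_def using step by blast
  moreover have "cross_edges A B \<subseteq> (\<lambda>b. {b[i := b ! i - 1], b}) ` B"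
  proof
    fix e assume "e \<in> cross_edges A B"
    then obtain a b where e: "e = {a, b}" "a \<in> A" "b \<in> B" "grid_adj a b"
      unfolding cross_edges_def by blast
    then have "b = a[i := a ! i + 1]" "i < length a" using step lenA by auto
    then have "a = b[i := b ! i - 1]" by simp
    with e show "e \<in> (\<lambda>b. {b[i := b ! i - 1], b}) ` B" by blast
  qed
  ultimately show ?thesis
    using assms(1,2) by (meson card_image_le card_mono finite_imageI le_trans min.boundedI)
qed

lemma grid_coordinate_cut:
  assumes S: "S \<subseteq> grid_pts k" "finite S" "card S \<ge> 2"
  obtains A B where "S = A \<union> B" "A \<inter> B = {}" "A \<noteq> {}" "B \<noteq> {}"
    "induced_edges S \<le> induced_edges A + induced_edges B + min (card A) (card B)"
proof -
  have "\<not> card S \<le> Suc 0" using S(3) by simp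
  then obtain x y where xy: "x \<in> S" "y \<in> S" "x \<noteq> y"
    using S(2) card_le_Suc0_iff_eq by blast
  then have "length x = k" "length y = k" using S(1) by (auto simp: grid_pts_def)
  then obtain i where i: "i < k" "x ! i \<noteq> y ! i"
    using xy(3) nth_equalityI by metis
  then obtain a b where ab: "a \<in> S" "b \<in> S" "a ! i < b ! i"
    using xy by (metis linorder_neqE)
  define A where "A = {z \<in> S. z ! i \<le> a ! i}"
  define B where "B = {z \<in> S. a ! i < z ! i}"
  have part: "S = A \<union> B" "A \<inter> B = {}" "A \<noteq> {}" "B \<noteq> {}"
    using ab by (auto simp: A_def B_def)
  have fin: "finite A" "finite B" using S(2) by (auto simp: A_def B_def)
  have "\<forall>z\<in>A. i < length z" using S(1) i(1) by (auto simp: A_def grid_pts_def)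
  then have "card (cross_edges A B) \<le> min (card A) (card B)"
    using fin by (intro card_cross_edges_le[where t = "a ! i"]) (auto simp: A_def B_def)
  moreover have "induced_edges S \<le> induced_edges A + induced_edges B + card (cross_edges A B)"
    using induced_edges_Un_le[OF fin] part(1) by simp
  ultimately show thesis by (intro that[OF part]) linarith
qed

lemma finite_induced_edges_values:
  "finite {induced_edges S | S. S \<subseteq> grid_pts k \<and> finite S \<and> card S = n}"
  by (rule finite_subset[of _ "{..2 ^ n}"]) (auto intro: induced_edges_le_exp)

lemma grid_pts_subset_of_card:
  assumes "k \<ge> 1"
  obtains S where "S \<subseteq> grid_pts k" "finite S" "card S = n"
proof
  let ?S = "(\<lambda>j. int j # replicate (k - 1) 0) ` {..<n}"
  have "inj_on (\<lambda>j. int j # replicate (k - 1) (0::int)) {..<n}" by (auto simp: inj_on_def)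
  then show "card ?S = n" by (simp add: card_image)
  show "?S \<subseteq> grid_pts k" using assms by (auto simp: grid_pts_def)
qed simp

lemma induced_edges_le_grid_g:
  "S \<subseteq> grid_pts k \<Longrightarrow> finite S \<Longrightarrow> induced_edges S \<le> grid_g k (card S)"
  unfolding grid_g_def by (rule Max_ge[OF finite_induced_edges_values]) blast

lemma grid_g_attained:
  assumes "k \<ge> 1"
  obtains S where "S \<subseteq> grid_pts k" "finite S" "card S = n" "induced_edges S = grid_g k n"
proof -
  obtain S0 where "S0 \<subseteq> grid_pts k" "finite S0" "card S0 = n"
    using grid_pts_subset_of_card[OF assms] .
  then have "{induced_edges S | S. S \<subseteq> grid_pts k \<and> finite S \<and> card S = n} \<noteq> {}"
    by blast
  then have "grid_g k n \<in> {induced_edges S | S. S \<subseteq> grid_pts k \<and> finite S \<and> card S = n}"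
    unfolding grid_g_def by (rule Max_in[OF finite_induced_edges_values])
  then show thesis using that by auto
qed

lemma grid_g_one:
  assumes "k \<ge> 1"
  shows "grid_g k 1 = 0"
proof -
  have zero: "induced_edges S = 0" if one: "card S = 1" for S
  proof -
    obtain a where "S = {a}" using one by (rule card_1_singletonE)
    then show ?thesis unfolding induced_edges_def using grid_adj_irrefl by auto
  qed
  obtain S0 where "S0 \<subseteq> grid_pts k" "finite S0" "card S0 = 1"
    using grid_pts_subset_of_card[OF assms] .
  with zero have "{induced_edges S | S. S \<subseteq> grid_pts k \<and> finite S \<and> card S = 1} = {0}"
    by fastforce
  then show ?thesis unfolding grid_g_def by simp
qed

lemma grid_g_split_bound:
  assumes "k \<ge> 1" "n \<ge> 2"
  obtains n1 n2 where "n1 + n2 = n" "n1 \<ge> 1" "n2 \<ge> 1"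
    "grid_g k n \<le> min n1 n2 + grid_g k n1 + grid_g k n2"
proof -
  obtain S where S: "S \<subseteq> grid_pts k" "finite S" "card S = n" "induced_edges S = grid_g k n"
    using grid_g_attained[OF assms(1)] .
  have "card S \<ge> 2" using S(3) assms(2) by simp
  then obtain A B where AB: "S = A \<union> B" "A \<inter> B = {}" "A \<noteq> {}" "B \<noteq> {}"
    "induced_edges S \<le> induced_edges A + induced_edges B + min (card A) (card B)"
    using grid_coordinate_cut[OF S(1,2)] by blast
  have sub: "A \<subseteq> grid_pts k" "B \<subseteq> grid_pts k" "finite A" "finite B" using S AB(1) by auto
  show thesis
  proof (rule that[of "card A" "card B"])
    show "card A + card B = n" using S(3) AB(1,2) sub by (simp add: card_Un_disjoint)
    show "card A \<ge> 1" "card B \<ge> 1" using AB(3,4) sub by (auto simp: Suc_le_eq card_gt_0_iff)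
    show "grid_g k n \<le> min (card A) (card B) + grid_g k (card A) + grid_g k (card B)"
      using AB(5) S(4) induced_edges_le_grid_g[of A k] induced_edges_le_grid_g[of B k] sub
      by linarith
  qed
qed

lemma finite_splitting_values:
  "finite {f n1 n2 | n1 n2. n1 + n2 = (n::nat) \<and> P n1 n2}"
  by (rule finite_subset[of _ "(\<lambda>(a, b). f a b) ` ({..n} \<times> {..n})"]) force+

theorem mainTheorem13:
  fixes k :: nat
  assumes "k \<ge> 1"
  shows "grid_g k 1 = 0 \<and>
    (\<forall>n\<ge>2. grid_g k n \<le>
       Max {min n1 n2 + grid_g k n1 + grid_g k n2 | n1 n2. n1 + n2 = n \<and> n1 \<ge> 1 \<and> n2 \<ge> 1})"
proof (intro conjI allI impI)
  show "grid_g k 1 = 0" using grid_g_one[OF assms] .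
next
  fix n :: nat assume "n \<ge> 2"
  then obtain n1 n2 where split: "n1 + n2 = n" "n1 \<ge> 1" "n2 \<ge> 1"
    and bound: "grid_g k n \<le> min n1 n2 + grid_g k n1 + grid_g k n2"
    using grid_g_split_bound[OF assms] by blast
  note bound
  also have "\<dots> \<le> Max {min n1 n2 + grid_g k n1 + grid_g k n2 | n1 n2. n1 + n2 = n \<and> n1 \<ge> 1 \<and> n2 \<ge> 1}"
    by (rule Max_ge[OF finite_splitting_values]) (use split in blast)
  finally show "grid_g k n \<le> \<dots>" .
qed

end
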